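(* For integers $n\ge0$ and $s,r\ge2$, $$\sum_{a+b=n}\zeta^\star(\{s\}^a)\,\zeta(sb+r)=\sum_{a+b=n}\zeta^\star(\{s\}^a,r,\{s\}^b),$$ the sums being over nonnegative integers $a,b$ with $a+b=n$.
   Context: $\zeta^\star(\alpha_1,\ldots,\alpha_k)=\sum_{1\le k_1\le\cdots\le k_k}k_1^{-\alpha_1}\cdots k_k^{-\alpha_k}$, with the convention $\zeta^\star(\{s\}^0)=1$; $\{s\}^a$ denotes $a$ repetitions of $s$; $\zeta$ is the Riemann zeta function. *)

theory Defs
  imports "HOL-Analysis.Analysis"
begin

definition rzeta :: "nat \<Rightarrow> real" where
  "rzeta s = (\<Sum>n. 1 / (real (Suc n)) ^ s)"

(* For the empty list this gives 1 (the single empty tuple, empty product). *)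
definition zeta_star :: "nat list \<Rightarrow> real" where
  "zeta_star as =
     infsum (\<lambda>ks. \<Prod>i<length as. 1 / (real (ks ! i)) ^ (as ! i))
            {ks. length ks = length as \<and> sorted ks \<and> (\<forall>k\<in>set ks. 0 < k)}"

end

theory Submission
  imports Defs
begin

(* Both sides are sums of the same nonnegative terms over index sets in bijection. Expanded, the
   left side sums c_1^-s ... c_a^-s m^-(s(n-a)+r) over a <= n, sorted positive tuples c of length a
   and m >= 1; the right side sums the terms of zeta*({s}^a, r, {s}^(n-a)) over a <= n and sorted
   positive tuples k of length n+1 whose entry at position a carries the exponent r. Inserting m
   into c as a run of n-a+1 equal entries, the first of which carries r, is a term-preserving
   bijection between the two index sets; its inverse deletes the entry at position a together
   with the later entries equal to it. *)

lemma has_sum_rzeta: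
  assumes "k \<ge> 2"
  shows "((\<lambda>m::nat. 1 / real m ^ k) has_sum rzeta k) {m. 0 < m}"
proof -
  have "(\<lambda>n. 1 / real (Suc n) ^ k) sums rzeta k"
    unfolding rzeta_def using inverse_power_summable[OF assms] summable_Suc_iff[of "\<lambda>n. 1 / real n ^ k"]
    by (intro summable_sums) (simp add: inverse_eq_divide)
  then have "((\<lambda>m::nat. 1 / real m ^ k) has_sum rzeta k) (range Suc)"
    by (subst has_sum_reindex) (auto simp: o_def intro: sums_nonneg_imp_has_sum)
  moreover have "range Suc = {m. 0 < m}"
    using gr0_implies_Suc by auto
  ultimately show ?thesis by simp
qed

lemma nonneg_has_sum_SigmaI:
  fixes f :: "'a \<times> 'b \<Rightarrow> real"
  assumes "\<And>x. x \<in> A \<Longrightarrow> ((\<lambda>y. f (x, y)) has_sum g x) (B x)"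
    and "(g has_sum S) A"
    and "\<And>x y. x \<in> A \<Longrightarrow> y \<in> B x \<Longrightarrow> f (x, y) \<ge> 0"
  shows "(f has_sum S) (Sigma A B)"
  using assms by (intro has_sum_SigmaI summable_on_SigmaI) (auto dest: has_sum_imp_summable)

lemma nonneg_has_sum_mult:
  fixes f :: "'a \<Rightarrow> real" and g :: "'b \<Rightarrow> real"
  assumes "(f has_sum x) A" and "(g has_sum y) B"
    and "\<And>p. p \<in> A \<Longrightarrow> f p \<ge> 0" and "\<And>q. q \<in> B \<Longrightarrow> g q \<ge> 0"
  shows "((\<lambda>(p, q). f p * g q) has_sum (x * y)) (A \<times> B)"
  using assms by (intro nonneg_has_sum_SigmaI[where g = "\<lambda>p. f p * y"])
    (auto intro: has_sum_cmult_right has_sum_cmult_left)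

definition inv_pow_prod :: "nat \<Rightarrow> nat list \<Rightarrow> real" where
  "inv_pow_prod s ks = (\<Prod>k\<leftarrow>ks. 1 / real k ^ s)"

lemma inv_pow_prod_simps [simp]:
  "inv_pow_prod s [] = 1"
  "inv_pow_prod s (k # ks) = 1 / real k ^ s * inv_pow_prod s ks"
  "inv_pow_prod s (ks @ ls) = inv_pow_prod s ks * inv_pow_prod s ls"
  "inv_pow_prod s (replicate b m) = 1 / real m ^ (s * b)"
  by (simp_all add: inv_pow_prod_def prod_list_replicate power_mult power_one_over)

lemma inv_pow_prod_nonneg: "inv_pow_prod s ks \<ge> 0"
  by (induction ks) auto

definition zs_term :: "nat list \<Rightarrow> nat list \<Rightarrow> real" where
  "zs_term es ks = (\<Prod>i<length es. 1 / real (ks ! i) ^ (es ! i))"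

definition sorted_pos_lists :: "nat \<Rightarrow> nat list set" where
  "sorted_pos_lists l = {ks. length ks = l \<and> sorted ks \<and> (\<forall>k\<in>set ks. 0 < k)}"

lemma zeta_star_eq_infsum: "zeta_star es = infsum (zs_term es) (sorted_pos_lists (length es))"
  unfolding zeta_star_def zs_term_def sorted_pos_lists_def ..

lemma zs_term_simps [simp]:
  "zs_term [] ks = 1"
  "zs_term (e # es) (k # ks) = 1 / real k ^ e * zs_term es ks"
  by (simp_all add: zs_term_def prod.lessThan_Suc_shift del: prod.lessThan_Suc)

lemma zs_term_append:
  "length ks = length es \<Longrightarrow> zs_term (es @ fs) (ks @ ls) = zs_term es ks * zs_term fs ls"
  by (induction ks es rule: list_induct2) simp_all

lemma zs_term_replicate: "length ks = a \<Longrightarrow> zs_term (replicate a s) ks = inv_pow_prod s ks"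
  by (induction ks arbitrary: a) auto

lemma zs_term_marked:
  "zs_term (replicate (length xs) s @ [r] @ replicate (length ys) s) (xs @ m # ys)
     = inv_pow_prod s xs * (1 / real m ^ r) * inv_pow_prod s ys"
  using zs_term_append[of xs "replicate (length xs) s"] by (simp add: zs_term_replicate)

lemma has_sum_inv_pow_prod_pos_lists:
  assumes "s \<ge> 2"
  shows "(inv_pow_prod s has_sum rzeta s ^ l) {ks. length ks = l \<and> (\<forall>k\<in>set ks. 0 < k)}"
proof (induction l)
  case 0
  have "{ks :: nat list. length ks = 0 \<and> (\<forall>k\<in>set ks. 0 < k)} = {[]}" by auto
  then show ?case using has_sum_finite[of "{[]}" "inv_pow_prod s"] by simp
next
  case (Suc l)
  let ?P = "{ks :: nat list. length ks = l \<and> (\<forall>k\<in>set ks. 0 < k)}"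
  have "((\<lambda>(k, ks). 1 / real k ^ s * inv_pow_prod s ks) has_sum rzeta s * rzeta s ^ l) ({k. 0 < k} \<times> ?P)"
    using has_sum_rzeta[OF assms] Suc by (rule nonneg_has_sum_mult) (auto simp: inv_pow_prod_nonneg)
  then have "(inv_pow_prod s has_sum rzeta s ^ Suc l) ((\<lambda>(k, ks). k # ks) ` ({k. 0 < k} \<times> ?P))"
    by (subst has_sum_reindex) (auto simp: inj_on_def o_def split_beta')
  moreover have "(\<lambda>(k, ks). k # ks) ` ({k. 0 < k} \<times> ?P) = {ks. length ks = Suc l \<and> (\<forall>k\<in>set ks. 0 < k)}"
    by (auto simp: image_iff length_Suc_conv)
  ultimately show ?case by simp
qed

lemma has_sum_zeta_star_replicate:
  assumes "s \<ge> 2"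
  shows "(inv_pow_prod s has_sum zeta_star (replicate a s)) (sorted_pos_lists a)"
proof -
  have "inv_pow_prod s summable_on sorted_pos_lists a"
    using has_sum_inv_pow_prod_pos_lists[OF assms, of a]
    by (rule summable_on_subset_banach[OF has_sum_imp_summable]) (auto simp: sorted_pos_lists_def)
  moreover have "zeta_star (replicate a s) = infsum (inv_pow_prod s) (sorted_pos_lists a)"
    unfolding zeta_star_eq_infsum by (auto simp: sorted_pos_lists_def zs_term_replicate intro: infsum_cong)
  ultimately show ?thesis by (simp add: has_sum_iff)
qed

lemma sorted_filter_le_append_filter_gt:
  fixes xs :: "'a :: linorder list"
  assumes "sorted xs"
  shows "filter (\<lambda>x. x \<le> m) xs @ filter (\<lambda>x. m < x) xs = xs"
  using assms
proof (induction xs)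
  case (Cons x xs)
  show ?case
  proof (cases "x \<le> m")
    case False
    with Cons.prems have "\<forall>y\<in>set xs. m < y" by fastforce
    with False show ?thesis by (auto simp: filter_empty_conv filter_id_conv)
  qed (use Cons in auto)
qed simp

lemma sorted_replicate_append_filter_gt:
  fixes xs :: "'a :: linorder list"
  assumes "sorted xs" and "\<forall>x\<in>set xs. m \<le> x"
  shows "replicate (length (filter (\<lambda>x. x = m) xs)) m @ filter (\<lambda>x. m < x) xs = xs"
  using assms
proof (induction xs)
  case (Cons x xs)
  show ?case
  proof (cases "x = m")
    case False
    with Cons.prems have "\<forall>y\<in>set (x # xs). m < y" by fastforce
    then show ?thesis by (force simp: filter_empty_conv filter_id_conv)
  qed (use Cons in auto)
qed simp

definition insert_run :: "nat \<Rightarrow> nat \<times> nat list \<times> nat \<Rightarrow> nat \<times> nat list" where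
  "insert_run n = (\<lambda>(a, cs, m).
     (length (filter (\<lambda>c. c \<le> m) cs),
      filter (\<lambda>c. c \<le> m) cs @ m # replicate (n - a) m @ filter (\<lambda>c. m < c) cs))"

definition remove_run :: "nat \<times> nat list \<Rightarrow> nat \<times> nat list \<times> nat" where
  "remove_run = (\<lambda>(a, ks).
     let cs = take a ks @ filter (\<lambda>k. k \<noteq> ks ! a) (drop (Suc a) ks) in (length cs, cs, ks ! a))"

lemma remove_run_split:
  "remove_run (length xs, xs @ m # ys) =
     (length xs + length (filter (\<lambda>y. y \<noteq> m) ys), xs @ filter (\<lambda>y. y \<noteq> m) ys, m)"
  by (simp add: remove_run_def)

lemma remove_insert_run:
  assumes "sorted cs" and "length cs = a"
  shows "remove_run (insert_run n (a, cs, m)) = (a, cs, m)"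
proof -
  let ?A = "filter (\<lambda>c. c \<le> m) cs" and ?P = "filter (\<lambda>c. m < c) cs"
  have "filter (\<lambda>y. y \<noteq> m) (replicate (n - a) m @ ?P) = ?P"
    by (auto intro: filter_cong)
  moreover have "?A @ ?P = cs"
    using assms(1) by (rule sorted_filter_le_append_filter_gt)
  ultimately show ?thesis
    using remove_run_split[of ?A m "replicate (n - a) m @ ?P"] assms(2)
    by (simp add: insert_run_def) (metis length_append)
qed

lemma insert_remove_run:
  assumes "sorted (xs @ m # ys)" and "length xs + length ys = n"
  shows "insert_run n (remove_run (length xs, xs @ m # ys)) = (length xs, xs @ m # ys)"
proof -
  have xs: "\<forall>x\<in>set xs. x \<le> m" and ys: "sorted ys" "\<forall>y\<in>set ys. m \<le> y"
    using assms(1) by (auto simp: sorted_append)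
  let ?cs = "xs @ filter (\<lambda>y. y \<noteq> m) ys"
  have le: "filter (\<lambda>c. c \<le> m) ?cs = xs"
    using xs ys by (force simp: filter_empty_conv filter_id_conv)
  have gt: "filter (\<lambda>c. m < c) ?cs = filter (\<lambda>y. m < y) ys"
    using xs by (auto simp: filter_empty_conv not_less intro!: filter_cong)
  have eq: "n - (length xs + length (filter (\<lambda>y. y \<noteq> m) ys)) = length (filter (\<lambda>y. y = m) ys)"
    using sum_length_filter_compl[of "\<lambda>y. y = m" ys] assms(2) by simp
  show ?thesis
    unfolding remove_run_split insert_run_def prod.case le gt eq
    using sorted_replicate_append_filter_gt[OF ys] by simp
qed

lemma sorted_pos_lists_split:
  assumes "ks \<in> sorted_pos_lists (Suc n)" and "a \<le> n"
  obtains xs m ys where "ks = xs @ m # ys" and "length xs = a" and "length xs + length ys = n"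
proof
  have "a < length ks"
    using assms by (simp add: sorted_pos_lists_def)
  then show "ks = take a ks @ ks ! a # drop (Suc a) ks"
    by (rule id_take_nth_drop)
  show "length (take a ks) = a" "length (take a ks) + length (drop (Suc a) ks) = n"
    using assms by (auto simp: sorted_pos_lists_def)
qed

lemma insert_run_mem:
  assumes "a \<le> n" and "cs \<in> sorted_pos_lists a" and "0 < m"
  shows "insert_run n (a, cs, m) \<in> {..n} \<times> sorted_pos_lists (Suc n)"
proof -
  let ?A = "filter (\<lambda>c. c \<le> m) cs" and ?P = "filter (\<lambda>c. m < c) cs"
  let ?ks = "?A @ m # replicate (n - a) m @ ?P"
  have cs: "sorted cs" "length cs = a" "\<forall>c\<in>set cs. 0 < c"
    using assms(2) by (simp_all add: sorted_pos_lists_def)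
  then have "sorted ?ks"
    by (auto simp: sorted_append sorted_wrt_filter)
  moreover have "length ?A + length ?P = a"
    using sum_length_filter_compl[of "\<lambda>c. c \<le> m" cs] cs(2) by (simp add: not_le)
  then have "length ?ks = Suc n" "length ?A \<le> n"
    using assms(1) by simp_all
  moreover have "\<forall>k\<in>set ?ks. 0 < k"
    using assms(3) cs(3) by auto
  ultimately show ?thesis
    unfolding insert_run_def sorted_pos_lists_def by simp
qed

lemma remove_run_mem:
  assumes "a \<le> n" and "ks \<in> sorted_pos_lists (Suc n)"
  shows "remove_run (a, ks) \<in> (SIGMA a:{..n}. sorted_pos_lists a \<times> {m. 0 < m})"
proof -
  obtain xs m ys where "ks = xs @ m # ys" "length xs = a" "length xs + length ys = n"
    using assms(2,1) by (rule sorted_pos_lists_split)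
  moreover have "length (filter (\<lambda>y. y \<noteq> m) ys) \<le> length ys" by simp
  ultimately show ?thesis
    using assms(2) remove_run_split[of xs m ys]
    by (auto simp: sorted_pos_lists_def sorted_append sorted_wrt_filter)
qed

lemma insert_run_bij_betw:
  "bij_betw (insert_run n) (SIGMA a:{..n}. sorted_pos_lists a \<times> {m. 0 < m}) ({..n} \<times> sorted_pos_lists (Suc n))"
proof (rule bij_betw_byWitness[where f' = remove_run])
  show "\<forall>x\<in>SIGMA a:{..n}. sorted_pos_lists a \<times> {m. 0 < m}. remove_run (insert_run n x) = x"
    using remove_insert_run by (auto simp: sorted_pos_lists_def)
  show "\<forall>y\<in>{..n} \<times> sorted_pos_lists (Suc n). insert_run n (remove_run y) = y"
  proof clarify
    fix a ks assume ks: "ks \<in> sorted_pos_lists (Suc n)" and "a \<le> n"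
    then obtain xs m ys where "ks = xs @ m # ys" "length xs = a" "length xs + length ys = n"
      by (rule sorted_pos_lists_split)
    with ks insert_remove_run[of xs m ys n] show "insert_run n (remove_run (a, ks)) = (a, ks)"
      by (simp add: sorted_pos_lists_def)
  qed
  show "insert_run n ` (SIGMA a:{..n}. sorted_pos_lists a \<times> {m. 0 < m}) \<subseteq> {..n} \<times> sorted_pos_lists (Suc n)"
    by (blast intro: insert_run_mem)
  show "remove_run ` ({..n} \<times> sorted_pos_lists (Suc n)) \<subseteq> (SIGMA a:{..n}. sorted_pos_lists a \<times> {m. 0 < m})"
    by (blast intro: remove_run_mem)
qed

lemma zs_term_insert_run:
  assumes "sorted cs" and "length cs \<le> n"
  shows "(\<lambda>(a, ks). zs_term (replicate a s @ [r] @ replicate (n - a) s) ks) (insert_run n (length cs, cs, m))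
           = inv_pow_prod s cs / real m ^ (s * (n - length cs) + r)"
proof -
  let ?A = "filter (\<lambda>c. c \<le> m) cs" and ?P = "filter (\<lambda>c. m < c) cs"
  let ?B = "replicate (n - length cs) m @ ?P"
  have cs: "?A @ ?P = cs"
    using assms(1) by (rule sorted_filter_le_append_filter_gt)
  then have "length ?A + length ?P = length cs"
    by (metis length_append)
  then have "n - length ?A = length ?B"
    using assms(2) by simp
  then have "(\<lambda>(a, ks). zs_term (replicate a s @ [r] @ replicate (n - a) s) ks) (insert_run n (length cs, cs, m))
      = inv_pow_prod s ?A * (1 / real m ^ r) * inv_pow_prod s ?B"
    unfolding insert_run_def prod.case by (simp only: zs_term_marked)
  also have "\<dots> = inv_pow_prod s (?A @ ?P) / real m ^ (s * (n - length cs) + r)"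
    by (simp add: power_add field_simps)
  finally show ?thesis
    using cs by simp
qed

lemma has_sum_zeta_star_marked_terms:
  assumes "s \<ge> 2" and "r \<ge> 2"
  shows "((\<lambda>(a, ks). zs_term (replicate a s @ [r] @ replicate (n - a) s) ks) has_sum
           (\<Sum>a\<le>n. zeta_star (replicate a s) * rzeta (s * (n - a) + r))) ({..n} \<times> sorted_pos_lists (Suc n))"
proof -
  let ?lhs = "\<Sum>a\<le>n. zeta_star (replicate a s) * rzeta (s * (n - a) + r)"
  let ?A = "SIGMA a:{..n}. sorted_pos_lists a \<times> {m. 0 < m}"
  let ?G = "\<lambda>(a, cs, m). inv_pow_prod s cs / real m ^ (s * (n - a) + r)"
  let ?F = "\<lambda>(a, ks). zs_term (replicate a s @ [r] @ replicate (n - a) s) ks"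
  have "((\<lambda>(cs, m). inv_pow_prod s cs / real m ^ (s * (n - a) + r)) has_sum
          zeta_star (replicate a s) * rzeta (s * (n - a) + r)) (sorted_pos_lists a \<times> {m. 0 < m})" for a
    using nonneg_has_sum_mult[OF has_sum_zeta_star_replicate has_sum_rzeta] assms
    by (simp add: inv_pow_prod_nonneg)
  then have "(?G has_sum ?lhs) ?A"
    by (intro nonneg_has_sum_SigmaI[where g = "\<lambda>a. zeta_star (replicate a s) * rzeta (s * (n - a) + r)"])
      (auto simp: inv_pow_prod_nonneg)
  also have "(?G has_sum ?lhs) ?A \<longleftrightarrow> ((\<lambda>x. ?F (insert_run n x)) has_sum ?lhs) ?A"
    by (rule has_sum_cong) (use zs_term_insert_run in \<open>auto simp: sorted_pos_lists_def\<close>)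
  finally show ?thesis
    by (simp only: has_sum_reindex_bij_betw[OF insert_run_bij_betw])
qed

theorem proposition4p1:
  fixes n s r :: nat
  assumes "s \<ge> 2" and "r \<ge> 2"
  shows "(\<Sum>a\<le>n. zeta_star (replicate a s) * rzeta (s * (n - a) + r))
       = (\<Sum>a\<le>n. zeta_star (replicate a s @ [r] @ replicate (n - a) s))"
proof -
  let ?E = "\<lambda>a. replicate a s @ [r] @ replicate (n - a) s"
  note terms = has_sum_zeta_star_marked_terms[OF assms, of n]
  have "(zs_term (?E a) has_sum zeta_star (?E a)) (sorted_pos_lists (Suc n))" if "a \<le> n" for a
    using summable_on_SigmaD1[OF has_sum_imp_summable[OF terms]] that
    by (simp add: has_sum_iff zeta_star_eq_infsum)
  then have "((\<lambda>a. zeta_star (?E a)) has_sum (\<Sum>a\<le>n. zeta_star (replicate a s) * rzeta (s * (n - a) + r))) {..n}"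
    by (intro has_sum_Sigma'[OF terms]) simp
  moreover have "((\<lambda>a. zeta_star (?E a)) has_sum (\<Sum>a\<le>n. zeta_star (?E a))) {..n}"
    by (rule has_sum_finite) simp
  ultimately show ?thesis
    by (rule has_sum_unique)
qed

end
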